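(* For every integer $m\ge0$, the following identity of rational functions in indeterminates $x,y$ holds: $$\frac{(1-x^{m+1})(1-y^{m+1})}{(1-x)^{m+1}(1-y)^{m+1}}=\sum_{r=0}^{m}\sum_{s=0}^{m-r}\frac{m+1}{m+1-r-s}\binom{m-r}{s}\binom{m-s}{r}\frac{x^ry^s}{(1-x)^{r+s}(1-y)^{r+s}}.$$ Equivalently, for every integer $m\ge1$, $$(1-x^m)(1-y^m)=\sum_{k=0}^{m-1}\sum_{i=0}^{k}\frac{m}{m-k}\binom{m-k+i-1}{i}\binom{m-i-1}{k-i}x^iy^{k-i}(1-x)^{m-k}(1-y)^{m-k}.$$ *)

theory Defs
  imports Complex_Main
begin

end

(*
  Let G(t) = sum_m (1 - x^m)(1 - y^m) t^m, A = 1/((1 - x t)(1 - y t)), P = (1 - x)(1 - y) t A and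
  R = t A'/A = x t/(1 - x t) + y t/(1 - y t). An identity of rational functions gives
  (1 - P) G = P (1 + R), so G = sum_{n>=1} P^n (1 + R). Since t (A^n)' = n A^n R, the t^m
  coefficient of P^n (1 + R) is ((1 - x)(1 - y))^n (m/n) [t^(m-n)] A^n, and the coefficients of A^n
  are a convolution of two negative binomial series; reindexing by k = m - n gives the second
  identity. The first follows from the second for m + 1 after dividing by ((1 - x)(1 - y))^(m+1)
  and summing over the triangle r + s = k.
*)
theory Submission
  imports Defs "HOL-Computational_Algebra.Formal_Power_Series"
begin

unbundle fps_syntax

definition fps_geom :: "'a::comm_ring_1 \<Rightarrow> 'a fps" where
  "fps_geom c = Abs_fps (\<lambda>k. c ^ k)"

lemma fps_geom_nth [simp]: "fps_geom c $ k = c ^ k"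
  by (simp add: fps_geom_def)

lemma fps_geom_times_one_minus: "fps_geom c * (1 - fps_const c * fps_X) = 1"
proof -
  have "fps_geom c * (1 - fps_const c * fps_X) = fps_geom c - fps_X * (fps_const c * fps_geom c)"
    by (simp add: algebra_simps)
  also have "\<dots> = 1"
    by (rule fps_ext) (auto simp: gr0_conv_Suc)
  finally show ?thesis .
qed

lemma fps_geom_Suc_power_nth: "(fps_geom c ^ Suc n) $ k = of_nat (n + k choose k) * c ^ k"
proof (induction n arbitrary: k)
  case (Suc n)
  have "(fps_geom c ^ Suc (Suc n)) $ k = (\<Sum>i=0..k. (fps_geom c ^ Suc n) $ i * c ^ (k - i))"
    by (simp only: power_Suc2[of _ "Suc n"] fps_mult_nth fps_geom_nth)
  also have "\<dots> = (\<Sum>i=0..k. of_nat (n + i choose i) * c ^ k)"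
    using Suc.IH by (intro sum.cong) (auto simp: mult.assoc simp flip: power_add)
  also have "\<dots> = of_nat (Suc n + k choose k) * c ^ k"
    by (simp add: sum_choose_lower atLeast0AtMost flip: sum_distrib_right of_nat_sum)
  finally show ?case .
qed simp

lemma fps_geom_power_nth: "(fps_geom c ^ n) $ k = of_nat (n + k - 1 choose k) * c ^ k"
  by (cases n; cases k) (simp_all add: fps_geom_Suc_power_nth binomial_eq_0 del: power_Suc)

lemma fps_deriv_fps_geom: "fps_deriv (fps_geom c) = fps_const c * fps_geom c ^ 2"
  by (rule fps_ext) (simp add: fps_geom_power_nth)

lemma fps_power_mult_nth_eq_0:
  fixes f g :: "'a::comm_ring_1 fps"
  assumes "f $ 0 = 0" "k < n"
  shows "(f ^ n * g) $ k = 0"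
  using assms startsby_zero_power_prefix[OF assms(1)] by (simp add: fps_mult_nth)

lemma fps_eq_sum_powers_mult_plus:
  fixes f g h :: "'a::comm_ring_1 fps"
  assumes "(1 - f) * g = f * h"
  shows "g = (\<Sum>n=1..N. f ^ n * h) + f ^ N * g"
proof (induction N)
  case (Suc N)
  have "f ^ N * g = f ^ Suc N * h + f ^ Suc N * g"
    using arg_cong[OF assms, of "\<lambda>u. f ^ N * (u + f * g)"] by (simp add: algebra_simps)
  with Suc.IH show ?case by (simp add: add.assoc)
qed simp

lemma fps_nth_eq_sum_powers_mult_nth:
  fixes f g h :: "'a::comm_ring_1 fps"
  assumes "(1 - f) * g = f * h" "f $ 0 = 0"
  shows "g $ m = (\<Sum>n=1..m. (f ^ n * h) $ m)"
proof -
  have "g $ m = (\<Sum>n=1..Suc m. (f ^ n * h) $ m) + (f ^ Suc m * g) $ m"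
    by (subst fps_eq_sum_powers_mult_plus[OF assms(1), of "Suc m"]) (simp add: fps_sum_nth)
  then show ?thesis
    by (simp add: fps_power_mult_nth_eq_0 assms(2) del: power_Suc)
qed

lemma fps_power_mult_one_plus_nth:
  fixes A R :: "'a::field_char_0 fps"
  assumes "fps_X * fps_deriv A = A * R" "n > 0"
  shows "(A ^ n * (1 + R)) $ k = of_nat (n + k) / of_nat n * (A ^ n) $ k"
proof -
  have "fps_X * fps_deriv (A ^ n) = of_nat n * (fps_X * fps_deriv A) * A ^ (n - 1)"
    unfolding fps_deriv_power' by (simp only: ac_simps)
  also have "\<dots> = of_nat n * (A ^ n * R)"
    unfolding assms(1) using assms(2) by (cases n) (simp_all add: algebra_simps)
  finally have "fps_X * fps_deriv (A ^ n) = of_nat n * (A ^ n * R)" .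
  moreover have "(fps_X * fps_deriv B) $ k = of_nat k * B $ k" for B :: "'a fps"
    by (cases k) auto
  ultimately have "of_nat n * (A ^ n * R) $ k = of_nat k * (A ^ n) $ k"
    by (metis fps_mult_left_const_nth fps_of_nat)
  with assms(2) show ?thesis
    by (simp add: field_simps algebra_simps)
qed

lemma sum_triangle_reindex:
  fixes m :: nat
  shows "(\<Sum>r = 0..m. \<Sum>s = 0..m - r. f r s) = (\<Sum>k = 0..m. \<Sum>i = 0..k. f i (k - i))"
proof -
  have "{(r, s). r + s \<le> m} = Sigma {0..m} (\<lambda>r. {0..m - r})"
    by auto
  then show ?thesis
    using sum.triangle_reindex_eq[of "\<lambda>r s. f r s" m] by (simp add: sum.Sigma atLeast0AtMost)
qed

lemma fps_X_deriv_geom_product: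
  "fps_X * fps_deriv (fps_geom x * fps_geom y)
     = fps_geom x * fps_geom y * (fps_const x * fps_X * fps_geom x + fps_const y * fps_X * fps_geom y)"
  by (simp add: fps_deriv_fps_geom power2_eq_square algebra_simps)

(* u, v, w, z play 1/(1 - aX), 1/(1 - bX), 1/(1 - X), 1/(1 - abX); the identity comes down to
   (1 - aX)(1 - bX) - (1 - a)(1 - b)X = (1 - X)(1 - abX). *)
lemma geometric_inverses_identity:
  fixes a b X u v w z :: "'a::idom"
  assumes "u * (1 - a * X) = 1" "v * (1 - b * X) = 1" "w * (1 - X) = 1" "z * (1 - a * b * X) = 1"
  shows "(1 - (1 - a) * (1 - b) * X * u * v) * (w - u - v + z)
           = (1 - a) * (1 - b) * X * u * v * (1 + a * X * u + b * X * v)"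
  using assms by algebra

lemma one_minus_power_product_fps_equation:
  fixes x y :: "'a::idom"
  defines "P \<equiv> fps_const ((1 - x) * (1 - y)) * fps_X * fps_geom x * fps_geom y"
  shows "(1 - P) * Abs_fps (\<lambda>m. (1 - x ^ m) * (1 - y ^ m))
           = P * (1 + fps_const x * fps_X * fps_geom x + fps_const y * fps_X * fps_geom y)"
proof -
  have "Abs_fps (\<lambda>m. (1 - x ^ m) * (1 - y ^ m))
          = fps_geom 1 - fps_geom x - fps_geom y + fps_geom (x * y)"
    by (rule fps_ext) (simp add: power_mult_distrib algebra_simps)
  moreover have "P = (1 - fps_const x) * (1 - fps_const y) * fps_X * fps_geom x * fps_geom y"
    unfolding P_def by (metis fps_const_1_eq_1 fps_const_mult fps_const_sub)
  ultimately show ?thesis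
    using geometric_inverses_identity[OF fps_geom_times_one_minus[of x] fps_geom_times_one_minus[of y],
        of "fps_geom 1" "fps_geom (x * y)"] fps_geom_times_one_minus[of 1] fps_geom_times_one_minus[of "x * y"]
    by simp
qed

lemma one_minus_power_product_eq_sum_geom_product_nth:
  fixes x y :: "'a::field_char_0"
  shows "(1 - x ^ m) * (1 - y ^ m)
           = (\<Sum>n=1..m. ((1 - x) * (1 - y)) ^ n * (of_nat m / of_nat n)
                          * ((fps_geom x * fps_geom y) ^ n) $ (m - n))"
proof -
  define A where "A = fps_geom x * fps_geom y"
  define R where "R = fps_const x * fps_X * fps_geom x + fps_const y * fps_X * fps_geom y"
  define P where "P = fps_const ((1 - x) * (1 - y)) * fps_X * A"
  have generating: "(1 - P) * Abs_fps (\<lambda>m. (1 - x ^ m) * (1 - y ^ m)) = P * (1 + R)"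
    using one_minus_power_product_fps_equation[of x y]
    by (simp add: P_def A_def R_def mult.assoc add.assoc)
  have "(1 - x ^ m) * (1 - y ^ m) = (\<Sum>n=1..m. (P ^ n * (1 + R)) $ m)"
    using fps_nth_eq_sum_powers_mult_nth[OF generating, of m] by (simp add: P_def)
  also have "\<dots> = (\<Sum>n=1..m. ((1 - x) * (1 - y)) ^ n * (of_nat m / of_nat n) * (A ^ n) $ (m - n))"
  proof (rule sum.cong[OF refl])
    fix n assume n: "n \<in> {1..m}"
    have power_eq: "P ^ n * (1 + R) = fps_X ^ n * (fps_const (((1 - x) * (1 - y)) ^ n) * (A ^ n * (1 + R)))"
      by (simp add: P_def power_mult_distrib ac_simps)
    have "fps_X * fps_deriv A = A * R"
      using fps_X_deriv_geom_product by (simp add: A_def R_def)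
    then show "(P ^ n * (1 + R)) $ m
                       = ((1 - x) * (1 - y)) ^ n * (of_nat m / of_nat n) * (A ^ n) $ (m - n)"
      unfolding power_eq using n by (simp add: fps_X_power_mult_nth fps_power_mult_one_plus_nth)
  qed
  finally show ?thesis by (simp add: A_def)
qed

lemma fps_geom_product_power_nth:
  "((fps_geom x * fps_geom y) ^ n) $ j
     = (\<Sum>i=0..j. of_nat (n + i - 1 choose i) * of_nat (n + (j - i) - 1 choose (j - i))
                    * x ^ i * y ^ (j - i))"
  by (simp add: power_mult_distrib fps_mult_nth fps_geom_power_nth ac_simps)

lemma one_minus_power_product_eq_sum:
  fixes x y :: "'a::field_char_0"
  assumes "m \<ge> 1"
  shows "(1 - x ^ m) * (1 - y ^ m)
           = (\<Sum>k = 0..m - 1. \<Sum>i = 0..k.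
                of_nat m / of_nat (m - k)
                * of_nat ((m - k + i - 1) choose i) * of_nat ((m - i - 1) choose (k - i))
                * x ^ i * y ^ (k - i) * (1 - x) ^ (m - k) * (1 - y) ^ (m - k))"
proof -
  define c where "c n = ((1 - x) * (1 - y)) ^ n * (of_nat m / of_nat n)
                          * ((fps_geom x * fps_geom y) ^ n) $ (m - n)" for n
  have "(1 - x ^ m) * (1 - y ^ m) = (\<Sum>n=1..m. c n)"
    unfolding c_def by (rule one_minus_power_product_eq_sum_geom_product_nth)
  also have "\<dots> = (\<Sum>k=0..m-1. c (m - k))"
    using assms by (intro sum.reindex_bij_witness[where i="\<lambda>k. m - k" and j="\<lambda>n. m - n"]) auto
  also have "\<dots> = (\<Sum>k = 0..m - 1. \<Sum>i = 0..k.
                of_nat m / of_nat (m - k)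
                * of_nat ((m - k + i - 1) choose i) * of_nat ((m - i - 1) choose (k - i))
                * x ^ i * y ^ (k - i) * (1 - x) ^ (m - k) * (1 - y) ^ (m - k))"
  proof (rule sum.cong[OF refl])
    fix k assume "k \<in> {0..m-1}"
    then have "m - (m - k) = k" and "m - k + (k - i) - 1 = m - i - 1" if "i \<le> k" for i
      using that by auto
    then show "c (m - k) = (\<Sum>i = 0..k. of_nat m / of_nat (m - k)
                * of_nat ((m - k + i - 1) choose i) * of_nat ((m - i - 1) choose (k - i))
                * x ^ i * y ^ (k - i) * (1 - x) ^ (m - k) * (1 - y) ^ (m - k))"
      unfolding c_def fps_geom_product_power_nth sum_distrib_left
      by (auto intro!: sum.cong simp: power_mult_distrib ac_simps)
  qed
  finally show ?thesis .
qed

lemma one_minus_power_product_divide_eq_sum: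
  fixes x y :: "'a::field_char_0"
  assumes "x \<noteq> 1" "y \<noteq> 1"
  shows "(1 - x ^ (m + 1)) * (1 - y ^ (m + 1)) / ((1 - x) ^ (m + 1) * (1 - y) ^ (m + 1))
           = (\<Sum>r = 0..m. \<Sum>s = 0..m - r.
                of_nat (m + 1) / of_nat (m + 1 - r - s)
                * of_nat ((m - r) choose s) * of_nat ((m - s) choose r)
                * (x ^ r * y ^ s / ((1 - x) ^ (r + s) * (1 - y) ^ (r + s))))"
proof -
  define D where "D = (1 - x) ^ (m + 1) * (1 - y) ^ (m + 1)"
  define T where "T k i = of_nat (m + 1) / of_nat (m + 1 - k)
                * of_nat ((m + 1 - k + i - 1) choose i) * of_nat ((m + 1 - i - 1) choose (k - i))
                * x ^ i * y ^ (k - i) * (1 - x) ^ (m + 1 - k) * (1 - y) ^ (m + 1 - k)" for k i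
  have "(\<Sum>r = 0..m. \<Sum>s = 0..m - r.
                of_nat (m + 1) / of_nat (m + 1 - r - s)
                * of_nat ((m - r) choose s) * of_nat ((m - s) choose r)
                * (x ^ r * y ^ s / ((1 - x) ^ (r + s) * (1 - y) ^ (r + s))))
        = (\<Sum>k = 0..m. \<Sum>i = 0..k. T k i / D)"
    unfolding sum_triangle_reindex
  proof (intro sum.cong refl)
    fix k i assume "k \<in> {0..m}" "i \<in> {0..k}"
    then have "m + 1 - k + i - 1 = m - (k - i)" "m + 1 - i - 1 = m - i" "i + (k - i) = k"
        "m + 1 - i - (k - i) = m + 1 - k"
      by auto
    moreover have "D = ((1 - x) ^ (m + 1 - k) * (1 - y) ^ (m + 1 - k)) * ((1 - x) ^ k * (1 - y) ^ k)"
      using \<open>k \<in> {0..m}\<close> by (simp add: D_def ac_simps flip: power_add)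
    ultimately show "of_nat (m + 1) / of_nat (m + 1 - i - (k - i))
                * of_nat ((m - i) choose (k - i)) * of_nat ((m - (k - i)) choose i)
                * (x ^ i * y ^ (k - i) / ((1 - x) ^ (i + (k - i)) * (1 - y) ^ (i + (k - i))))
             = T k i / D"
      unfolding T_def using assms by simp
  qed
  also have "\<dots> = (1 - x ^ (m + 1)) * (1 - y ^ (m + 1)) / D"
    using one_minus_power_product_eq_sum[of "m + 1" x y]
    by (simp add: T_def sum_divide_distrib)
  finally show ?thesis
    by (simp add: D_def)
qed

theorem corollary2p6:
  fixes x y :: "'a :: field_char_0" and m :: nat
  shows "(x \<noteq> 1 \<and> y \<noteq> 1 \<longrightarrow>
           (1 - x ^ (m + 1)) * (1 - y ^ (m + 1)) / ((1 - x) ^ (m + 1) * (1 - y) ^ (m + 1))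
           = (\<Sum>r = 0..m. \<Sum>s = 0..m - r.
                of_nat (m + 1) / of_nat (m + 1 - r - s)
                * of_nat ((m - r) choose s) * of_nat ((m - s) choose r)
                * (x ^ r * y ^ s / ((1 - x) ^ (r + s) * (1 - y) ^ (r + s)))))
       \<and> (m \<ge> 1 \<longrightarrow>
           (1 - x ^ m) * (1 - y ^ m)
           = (\<Sum>k = 0..m - 1. \<Sum>i = 0..k.
                of_nat m / of_nat (m - k)
                * of_nat ((m - k + i - 1) choose i) * of_nat ((m - i - 1) choose (k - i))
                * x ^ i * y ^ (k - i) * (1 - x) ^ (m - k) * (1 - y) ^ (m - k)))"
  using one_minus_power_product_divide_eq_sum[of x y m] one_minus_power_product_eq_sum[of m x y]
  by blast

end
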